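(* Let $\ell\ge1$, $N=2^\ell$, let ${\mathbf x}_0,\dots,{\mathbf x}_{\omega-1}\in\mathbb{F}_2^\ell$ be distinct, and let $D=P_{{\mathbf x}_0}+\cdots+P_{{\mathbf x}_{\omega-1}}$ (the dyadic matrix whose signature has support $\{{\mathbf x}_0,\dots,{\mathbf x}_{\omega-1}\}$). Let $R$ be the number of ordered pairs $\big((u,v),(u',v')\big)$ with $u,v,u',v'\in\{0,\dots,\omega-1\}$, $u\ne v$, $u'\ne v'$, $u\ne u'$, $v\ne v'$ and ${\mathbf x}_u+{\mathbf x}_v={\mathbf x}_{u'}+{\mathbf x}_{v'}$; write $R=R^{c}+R^{nc}$, where $R^{c}$ counts those pairs with $u=v'$ and $v=u'$, and $R^{nc}$ the remaining ones. Then the number of $4$-cycles in the Tanner graph of $D$ is $$\mathcal{N}_4=\frac{2^\ell}{4}\left(R^{c}+R^{nc}\right).$$ In particular, if $\omega\ge2$ the Tanner graph of $D$ has girth $4$.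
   Context: Rows and columns of $N\times N$ binary matrices are indexed by $\mathbb{F}_2^\ell$ via ${\mathbf x}=(x_1,\dots,x_\ell)\leftrightarrow 1+\sum_i x_i2^{i-1}$. For ${\mathbf a}\in\mathbb{F}_2^\ell$, $P_{\mathbf a}$ is the $N\times N$ binary matrix with $(P_{\mathbf a})_{{\mathbf x},{\mathbf y}}=1$ iff ${\mathbf y}={\mathbf x}+{\mathbf a}$ (the dyadic permutation matrix with signature the indicator vector of ${\mathbf a}$). The Tanner graph of a binary matrix $H$ is the bipartite graph with one check node per row, one variable node per column, and an edge between row $r$ and column $c$ iff $H_{r,c}=1$. A $k$-cycle is a closed walk with $k$ edges and distinct vertices and edges; the girth is the length of a shortest cycle. *)

theory Defs
  imports Main "HOL-Library.Extended_Nat"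
begin

text \<open>Vectors of F_2^l are boolean lists of length l (bit i = coordinate x_(i+1));
  F_2 addition is exclusive or, i.e. inequality on bool.\<close>

definition vecs :: "nat \<Rightarrow> bool list set" where
  "vecs l = {xs. length xs = l}"

definition vadd :: "bool list \<Rightarrow> bool list \<Rightarrow> bool list" where
  "vadd xs ys = map2 (\<noteq>) xs ys"

definition dyadic_perm :: "bool list \<Rightarrow> bool list \<Rightarrow> bool list \<Rightarrow> nat" where
  "dyadic_perm a x y = (if y = vadd x a then 1 else 0)"

definition dyadic_sum :: "(nat \<Rightarrow> bool list) \<Rightarrow> nat \<Rightarrow> bool list \<Rightarrow> bool list \<Rightarrow> nat" where
  "dyadic_sum x w r c = (\<Sum>u<w. dyadic_perm (x u) r c)"

text \<open>Tanner graph of a matrix H with row index set Rs and column index set Cs: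
  check nodes Inl r, variable nodes Inr c, edge iff H r c = 1.\<close>

definition tanner_adj :: "'r set \<Rightarrow> 'c set \<Rightarrow> ('r \<Rightarrow> 'c \<Rightarrow> nat) \<Rightarrow> ('r + 'c) \<Rightarrow> ('r + 'c) \<Rightarrow> bool" where
  "tanner_adj Rs Cs H v w \<longleftrightarrow>
     (\<exists>r c. r \<in> Rs \<and> c \<in> Cs \<and> H r c = 1 \<and>
        ((v = Inl r \<and> w = Inr c) \<or> (v = Inr c \<and> w = Inl r)))"

text \<open>k-cycles of a (simple, undirected) graph given by a symmetric adjacency relation,
  identified with their edge sets: closed walks p_0 .. p_(k-1) p_0 with k edges,
  distinct vertices and distinct edges.\<close>

definition cycles :: "('v \<Rightarrow> 'v \<Rightarrow> bool) \<Rightarrow> nat \<Rightarrow> 'v set set set" where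
  "cycles adj k = {E. \<exists>p :: nat \<Rightarrow> 'v.
       k \<ge> 1 \<and> inj_on p {..<k} \<and> (\<forall>i<k. adj (p i) (p (Suc i mod k))) \<and>
       E = {{p i, p (Suc i mod k)} | i. i < k} \<and> card E = k}"

definition num_cycles :: "('v \<Rightarrow> 'v \<Rightarrow> bool) \<Rightarrow> nat \<Rightarrow> nat" where
  "num_cycles adj k = card (cycles adj k)"

definition girth :: "('v \<Rightarrow> 'v \<Rightarrow> bool) \<Rightarrow> enat" where
  "girth adj = Inf {enat k | k. cycles adj k \<noteq> {}}"

definition R_pairs :: "(nat \<Rightarrow> bool list) \<Rightarrow> nat \<Rightarrow> ((nat \<times> nat) \<times> (nat \<times> nat)) set" where
  "R_pairs x w = {((u, v), (u', v')). u < w \<and> v < w \<and> u' < w \<and> v' < w \<and>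
       u \<noteq> v \<and> u' \<noteq> v' \<and> u \<noteq> u' \<and> v \<noteq> v' \<and>
       vadd (x u) (x v) = vadd (x u') (x v')}"

definition R_c :: "(nat \<Rightarrow> bool list) \<Rightarrow> nat \<Rightarrow> nat" where
  "R_c x w = card {((u, v), (u', v')) \<in> R_pairs x w. u = v' \<and> v = u'}"

definition R_nc :: "(nat \<Rightarrow> bool list) \<Rightarrow> nat \<Rightarrow> nat" where
  "R_nc x w = card {((u, v), (u', v')) \<in> R_pairs x w. \<not> (u = v' \<and> v = u')}"

end

theory Submission
  imports Defs
begin

text \<open>A 4-cycle in the Tanner graph of a matrix \<open>H\<close> is the same thing as a rectangle of ones
  in \<open>H\<close> (rows \<open>r\<^sub>1 \<noteq> r\<^sub>2\<close>, columns \<open>c\<^sub>1 \<noteq> c\<^sub>2\<close>, all four entries 1), and every 4-cycle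
  comes from exactly four ordered rectangles: swap the rows, swap the columns.
  In \<open>D\<close> the entry \<open>(r, c)\<close> is 1 iff \<open>c = r + x\<^sub>u\<close> for a (necessarily unique) \<open>u\<close>. So an
  ordered rectangle is determined by its first row \<open>r\<^sub>1\<close> and the indices with
  \<open>c\<^sub>1 = r\<^sub>1 + x\<^sub>u = r\<^sub>2 + x\<^sub>v\<close> and \<open>c\<^sub>2 = r\<^sub>1 + x\<^sub>u\<^sub>' = r\<^sub>2 + x\<^sub>v\<^sub>'\<close>, and the conditions these indices
  satisfy are exactly those defining \<open>R\<close>; hence \<open>4 N\<^sub>4 = 2\<^sup>l R\<close>. A Tanner graph is bipartite
  and simple, so it has no cycle shorter than 4, and for \<open>\<omega> \<ge> 2\<close> the pair \<open>((0,1),(1,0))\<close>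
  lies in \<open>R\<close>.\<close>

lemma card_eq_mult_card_image:
  assumes "finite A" and "\<And>a. a \<in> A \<Longrightarrow> card {a' \<in> A. f a' = f a} = k"
  shows "card A = k * card (f ` A)"
proof -
  have "card A = (\<Sum>b\<in>f ` A. card {a \<in> A. f a = b})"
    using sum.group[where S = A and T = "f ` A" and g = f and h = "\<lambda>_. 1 :: nat"] assms(1) by simp
  also have "\<dots> = (\<Sum>b\<in>f ` A. k)"
    using assms(2) by (intro sum.cong) auto
  finally show ?thesis by simp
qed

lemma cyclesE:
  assumes "E \<in> cycles adj k"
  obtains p where "inj_on p {..<k}" "\<forall>i<k. adj (p i) (p (Suc i mod k))"
    "E = {{p i, p (Suc i mod k)} | i. i < k}" "card E = k"
  using assms unfolding cycles_def mem_Collect_eq by (elim exE conjE) (rule that)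

lemma cycles_4_iff:
  "E \<in> cycles adj 4 \<longleftrightarrow>
     (\<exists>a b c d. distinct [a, b, c, d] \<and> adj a b \<and> adj b c \<and> adj c d \<and> adj d a \<and>
        E = {{a, b}, {b, c}, {c, d}, {d, a}} \<and> card E = 4)"
proof -
  have all_less_4: "(\<forall>i<4. P i) \<longleftrightarrow> P 0 \<and> P 1 \<and> P 2 \<and> P (3::nat)" for P
    by (auto simp: numeral_eq_Suc less_Suc_eq)
  have image_less_4: "{f i | i. i < 4} = {f 0, f 1, f 2, f (3::nat)}" for f :: "nat \<Rightarrow> 'a set"
    by (auto simp: numeral_eq_Suc less_Suc_eq)
  have Suc_mod_4: "Suc 0 mod 4 = 1" "Suc 1 mod 4 = 2" "Suc 2 mod 4 = 3" "Suc 3 mod 4 = (0::nat)"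
    by simp_all
  have inj_on_less_4: "inj_on p {..<4} \<longleftrightarrow> distinct [p 0, p 1, p 2, p 3]" for p :: "nat \<Rightarrow> 'a"
    by (auto simp: inj_on_def lessThan_nat_numeral)
  note unfold_4 = inj_on_less_4 all_less_4 image_less_4 Suc_mod_4
  show ?thesis
  proof
    assume "E \<in> cycles adj 4"
    then obtain p where "inj_on p {..<4}" "\<forall>i<4. adj (p i) (p (Suc i mod 4))"
      "E = {{p i, p (Suc i mod 4)} | i. i < 4}" "card E = 4"
      by (rule cyclesE)
    then show "\<exists>a b c d. distinct [a, b, c, d] \<and> adj a b \<and> adj b c \<and> adj c d \<and> adj d a \<and>
        E = {{a, b}, {b, c}, {c, d}, {d, a}} \<and> card E = 4"
      unfolding unfold_4 by (intro exI[of _ "p 0"] exI[of _ "p 1"] exI[of _ "p 2"] exI[of _ "p 3"]) simp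
  next
    assume "\<exists>a b c d. distinct [a, b, c, d] \<and> adj a b \<and> adj b c \<and> adj c d \<and> adj d a \<and>
        E = {{a, b}, {b, c}, {c, d}, {d, a}} \<and> card E = 4"
    then obtain a b c d where *: "distinct [a, b, c, d]" "adj a b" "adj b c" "adj c d" "adj d a"
        "E = {{a, b}, {b, c}, {c, d}, {d, a}}" "card E = 4"
      by blast
    let ?p = "(!) [a, b, c, d]"
    have "inj_on ?p {..<4} \<and> (\<forall>i<4. adj (?p i) (?p (Suc i mod 4))) \<and>
        E = {{?p i, ?p (Suc i mod 4)} | i. i < 4}"
      unfolding unfold_4 using * by simp
    then show "E \<in> cycles adj 4"
      unfolding cycles_def using \<open>card E = 4\<close> by (intro CollectI exI[of _ ?p]) simp
  qed
qed

lemma cycles_0_empty: "cycles adj 0 = {}"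
  by (simp add: cycles_def)

lemma cycles_1_loop:
  assumes "E \<in> cycles adj 1"
  obtains a where "adj a a"
proof -
  obtain p where "\<forall>i<1. adj (p i) (p (Suc i mod 1))"
    using assms by (rule cyclesE)
  then show thesis using that by simp
qed

lemma cycles_2_empty: "cycles adj 2 = {}"
proof
  show "cycles adj 2 \<subseteq> {}"
  proof
    fix E assume "E \<in> cycles adj 2"
    then obtain p where "E = {{p i, p (Suc i mod 2)} | i. i < 2}" and "card E = 2"
      by (rule cyclesE)
    moreover have "{{p i, p (Suc i mod 2)} | i. i < 2} = {{p 0, p 1}}"
      by (auto simp: numeral_eq_Suc less_Suc_eq)
    ultimately show "E \<in> {}" by simp
  qed
qed simp

lemma cycles_3_triangle:
  assumes "E \<in> cycles adj 3"
  obtains a b c where "adj a b" "adj b c" "adj c a"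
proof -
  have all_less_3: "(\<forall>i<3. P i) \<longleftrightarrow> P 0 \<and> P 1 \<and> P (2::nat)" for P
    by (auto simp: numeral_eq_Suc less_Suc_eq)
  have Suc_mod_3: "Suc 0 mod 3 = 1" "Suc 1 mod 3 = 2" "Suc 2 mod 3 = (0::nat)"
    by simp_all
  obtain p where "\<forall>i<3. adj (p i) (p (Suc i mod 3))"
    using assms by (rule cyclesE)
  then have "adj (p 0) (p 1)" "adj (p 1) (p 2)" "adj (p 2) (p 0)"
    unfolding all_less_3 Suc_mod_3 by simp_all
  then show thesis by (rule that)
qed

lemma girth_eqI:
  assumes "cycles adj k \<noteq> {}" and "\<And>j. j < k \<Longrightarrow> cycles adj j = {}"
  shows "girth adj = enat k"
  unfolding girth_def
proof (rule antisym)
  show "Inf {enat k | k. cycles adj k \<noteq> {}} \<le> k"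
    using assms(1) by (auto intro: Inf_lower)
  show "enat k \<le> Inf {enat k | k. cycles adj k \<noteq> {}}"
  proof (rule Inf_greatest)
    fix y assume "y \<in> {enat k | k. cycles adj k \<noteq> {}}"
    then obtain j where "y = enat j" and "cycles adj j \<noteq> {}" by blast
    then have "\<not> j < k" using assms(2) by blast
    then show "enat k \<le> y" using \<open>y = enat j\<close> by simp
  qed
qed

lemma tanner_adj_simps [simp]:
  "tanner_adj Rs Cs H (Inl r) (Inr c) \<longleftrightarrow> r \<in> Rs \<and> c \<in> Cs \<and> H r c = 1"
  "tanner_adj Rs Cs H (Inr c) (Inl r) \<longleftrightarrow> r \<in> Rs \<and> c \<in> Cs \<and> H r c = 1"
  "\<not> tanner_adj Rs Cs H (Inl r) (Inl r')"
  "\<not> tanner_adj Rs Cs H (Inr c) (Inr c')"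
  by (auto simp: tanner_adj_def)

lemma cycles_tanner_adj_less_4:
  assumes "k < 4"
  shows "cycles (tanner_adj Rs Cs H) k = {}"
proof -
  have no_loop: "\<not> tanner_adj Rs Cs H v v" for v
    by (cases v) auto
  have no_triangle: "\<not> (tanner_adj Rs Cs H a b \<and> tanner_adj Rs Cs H b c \<and> tanner_adj Rs Cs H c a)"
    for a b c
    by (cases a; cases b; cases c) auto
  have "E \<notin> cycles (tanner_adj Rs Cs H) k" for E
  proof
    assume E: "E \<in> cycles (tanner_adj Rs Cs H) k"
    from assms consider "k = 0" | "k = 1" | "k = 2" | "k = 3"
      by linarith
    then show False
    proof cases
      case 1
      with E show False by (simp add: cycles_0_empty)
    next
      case 2
      with E show False by (metis cycles_1_loop no_loop)
    next
      case 3
      with E show False by (simp add: cycles_2_empty)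
    next
      case 4
      with E show False by (metis cycles_3_triangle no_triangle)
    qed
  qed
  then show ?thesis by blast
qed

definition rectangles :: "'r set \<Rightarrow> 'c set \<Rightarrow> ('r \<Rightarrow> 'c \<Rightarrow> nat) \<Rightarrow> ('r \<times> 'r \<times> 'c \<times> 'c) set" where
  "rectangles Rs Cs H = {(r\<^sub>1, r\<^sub>2, c\<^sub>1, c\<^sub>2). r\<^sub>1 \<in> Rs \<and> r\<^sub>2 \<in> Rs \<and> c\<^sub>1 \<in> Cs \<and> c\<^sub>2 \<in> Cs \<and>
     r\<^sub>1 \<noteq> r\<^sub>2 \<and> c\<^sub>1 \<noteq> c\<^sub>2 \<and> H r\<^sub>1 c\<^sub>1 = 1 \<and> H r\<^sub>2 c\<^sub>1 = 1 \<and> H r\<^sub>2 c\<^sub>2 = 1 \<and> H r\<^sub>1 c\<^sub>2 = 1}"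

definition rectangle_cycle :: "'r \<times> 'r \<times> 'c \<times> 'c \<Rightarrow> ('r + 'c) set set" where
  "rectangle_cycle = (\<lambda>(r\<^sub>1, r\<^sub>2, c\<^sub>1, c\<^sub>2).
     {{Inl r\<^sub>1, Inr c\<^sub>1}, {Inr c\<^sub>1, Inl r\<^sub>2}, {Inl r\<^sub>2, Inr c\<^sub>2}, {Inr c\<^sub>2, Inl r\<^sub>1}})"

lemma rectangle_cycle_eq_image:
  "rectangle_cycle (r\<^sub>1, r\<^sub>2, c\<^sub>1, c\<^sub>2) = (\<lambda>(r, c). {Inl r, Inr c}) ` ({r\<^sub>1, r\<^sub>2} \<times> {c\<^sub>1, c\<^sub>2})"
  by (auto simp: rectangle_cycle_def)

lemma rectangle_cycle_eq_iff:
  "rectangle_cycle (r\<^sub>1, r\<^sub>2, c\<^sub>1, c\<^sub>2) = rectangle_cycle (s\<^sub>1, s\<^sub>2, d\<^sub>1, d\<^sub>2) \<longleftrightarrow>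
     {r\<^sub>1, r\<^sub>2} = {s\<^sub>1, s\<^sub>2} \<and> {c\<^sub>1, c\<^sub>2} = {d\<^sub>1, d\<^sub>2}"
proof -
  have "inj (\<lambda>(r, c). {Inl r, Inr c} :: ('r + 'c) set)"
    by (auto intro!: injI simp: doubleton_eq_iff)
  then show ?thesis
    unfolding rectangle_cycle_eq_image inj_image_eq_iff[OF \<open>inj _\<close>] times_eq_iff by simp
qed

lemma cycles_4_tanner_adj:
  "cycles (tanner_adj Rs Cs H) 4 = rectangle_cycle ` rectangles Rs Cs H"
proof (intro equalityI subsetI)
  fix E assume "E \<in> cycles (tanner_adj Rs Cs H) 4"
  then obtain a b c d where walk: "distinct [a, b, c, d]" "tanner_adj Rs Cs H a b"
      "tanner_adj Rs Cs H b c" "tanner_adj Rs Cs H c d" "tanner_adj Rs Cs H d a"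
    and E: "E = {{a, b}, {b, c}, {c, d}, {d, a}}"
    unfolding cycles_4_iff by blast
  show "E \<in> rectangle_cycle ` rectangles Rs Cs H"
  proof (cases a)
    case (Inl r\<^sub>1)
    with walk obtain c\<^sub>1 r\<^sub>2 c\<^sub>2 where "b = Inr c\<^sub>1" "c = Inl r\<^sub>2" "d = Inr c\<^sub>2"
      by (cases b; cases c; cases d) auto
    with Inl walk E have "(r\<^sub>1, r\<^sub>2, c\<^sub>1, c\<^sub>2) \<in> rectangles Rs Cs H"
        and "E = rectangle_cycle (r\<^sub>1, r\<^sub>2, c\<^sub>1, c\<^sub>2)"
      by (auto simp: rectangles_def rectangle_cycle_def)
    then show ?thesis by blast
  next
    case (Inr c\<^sub>1)
    with walk obtain r\<^sub>1 c\<^sub>2 r\<^sub>2 where "b = Inl r\<^sub>1" "c = Inr c\<^sub>2" "d = Inl r\<^sub>2"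
      by (cases b; cases c; cases d) auto
    with Inr walk E have "(r\<^sub>1, r\<^sub>2, c\<^sub>2, c\<^sub>1) \<in> rectangles Rs Cs H"
        and "E = rectangle_cycle (r\<^sub>1, r\<^sub>2, c\<^sub>2, c\<^sub>1)"
      by (auto simp: rectangles_def rectangle_cycle_def)
    then show ?thesis by blast
  qed
next
  fix E assume "E \<in> rectangle_cycle ` rectangles Rs Cs H"
  then obtain r\<^sub>1 r\<^sub>2 c\<^sub>1 c\<^sub>2 where rect: "(r\<^sub>1, r\<^sub>2, c\<^sub>1, c\<^sub>2) \<in> rectangles Rs Cs H"
    and E: "E = rectangle_cycle (r\<^sub>1, r\<^sub>2, c\<^sub>1, c\<^sub>2)"
    by auto
  have "card E = 4"
    using rect unfolding E by (auto simp: rectangles_def rectangle_cycle_def card_insert_if doubleton_eq_iff)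
  with rect E show "E \<in> cycles (tanner_adj Rs Cs H) 4"
    unfolding cycles_4_iff
    by (intro exI[of _ "Inl r\<^sub>1"] exI[of _ "Inr c\<^sub>1"] exI[of _ "Inl r\<^sub>2"] exI[of _ "Inr c\<^sub>2"])
      (simp add: rectangles_def rectangle_cycle_def)
qed

lemma card_rectangles:
  assumes "finite Rs" and "finite Cs"
  shows "card (rectangles Rs Cs H) = 4 * num_cycles (tanner_adj Rs Cs H) 4"
proof -
  have "finite (rectangles Rs Cs H)"
    by (rule finite_subset[of _ "Rs \<times> Rs \<times> Cs \<times> Cs"]) (auto simp: rectangles_def assms)
  moreover have "card {t \<in> rectangles Rs Cs H. rectangle_cycle t = rectangle_cycle q} = 4"
    if "q \<in> rectangles Rs Cs H" for q
  proof -
    obtain r\<^sub>1 r\<^sub>2 c\<^sub>1 c\<^sub>2 where q: "q = (r\<^sub>1, r\<^sub>2, c\<^sub>1, c\<^sub>2)"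
      by (cases q)
    have "r\<^sub>1 \<noteq> r\<^sub>2" "c\<^sub>1 \<noteq> c\<^sub>2"
      using that unfolding q rectangles_def by simp_all
    have "t \<in> rectangles Rs Cs H \<and> rectangle_cycle t = rectangle_cycle q \<longleftrightarrow>
        t \<in> {(r\<^sub>1, r\<^sub>2, c\<^sub>1, c\<^sub>2), (r\<^sub>2, r\<^sub>1, c\<^sub>1, c\<^sub>2), (r\<^sub>1, r\<^sub>2, c\<^sub>2, c\<^sub>1), (r\<^sub>2, r\<^sub>1, c\<^sub>2, c\<^sub>1)}" for t
      using that unfolding q
      by (cases t) (auto simp: rectangle_cycle_eq_iff doubleton_eq_iff rectangles_def)
    then have "{t \<in> rectangles Rs Cs H. rectangle_cycle t = rectangle_cycle q} =
        {(r\<^sub>1, r\<^sub>2, c\<^sub>1, c\<^sub>2), (r\<^sub>2, r\<^sub>1, c\<^sub>1, c\<^sub>2), (r\<^sub>1, r\<^sub>2, c\<^sub>2, c\<^sub>1), (r\<^sub>2, r\<^sub>1, c\<^sub>2, c\<^sub>1)}"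
      by blast
    then show ?thesis
      using \<open>r\<^sub>1 \<noteq> r\<^sub>2\<close> \<open>c\<^sub>1 \<noteq> c\<^sub>2\<close> by simp
  qed
  ultimately show ?thesis
    unfolding num_cycles_def cycles_4_tanner_adj by (rule card_eq_mult_card_image)
qed

lemma mem_vecs [simp]: "a \<in> vecs l \<longleftrightarrow> length a = l"
  by (simp add: vecs_def)

lemma finite_vecs: "finite (vecs l)"
  and card_vecs: "card (vecs l) = 2 ^ l"
proof -
  have vecs_eq: "vecs l = {xs. set xs \<subseteq> UNIV \<and> length xs = l}"
    by (simp add: vecs_def)
  show "finite (vecs l)"
    unfolding vecs_eq by (rule finite_lists_length_eq) simp
  show "card (vecs l) = 2 ^ l"
    unfolding vecs_eq using card_lists_length_eq[of "UNIV :: bool set" l] by simp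
qed

lemma length_vadd [simp]: "length (vadd a b) = min (length a) (length b)"
  by (simp add: vadd_def)

lemma nth_vadd [simp]: "i < length a \<Longrightarrow> i < length b \<Longrightarrow> vadd a b ! i = (a ! i \<noteq> b ! i)"
  by (simp add: vadd_def)

lemma vadd_commute: "vadd a b = vadd b a"
  by (auto simp: list_eq_iff_nth_eq)

lemma vadd_left_cancel:
  "length b = length a \<Longrightarrow> length c = length a \<Longrightarrow> vadd a b = vadd a c \<longleftrightarrow> b = c"
  by (auto simp: list_eq_iff_nth_eq)

lemma vadd_right_cancel:
  "length b = length a \<Longrightarrow> length c = length a \<Longrightarrow> vadd b a = vadd c a \<longleftrightarrow> b = c"
  by (simp add: vadd_commute[of _ a] vadd_left_cancel)

lemma vadd_vadd_cancel: "length b = length a \<Longrightarrow> vadd a (vadd a b) = b"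
  by (auto simp: list_eq_iff_nth_eq)

lemma vadd_eq_vadd_swap:
  assumes "length b = length a" "length c = length a" "length d = length a"
  shows "vadd a b = vadd c d \<longleftrightarrow> vadd a c = vadd b d"
  using assms by (auto simp: list_eq_iff_nth_eq)

lemma dyadic_sum_eq_card: "dyadic_sum x w r c = card {u \<in> {..<w}. c = vadd r (x u)}"
  by (simp add: dyadic_sum_def dyadic_perm_def sum.inter_filter[symmetric])

lemma dyadic_sum_eq_1_iff:
  assumes "length r = l" and "\<forall>u<w. x u \<in> vecs l" and "inj_on x {..<w}"
  shows "dyadic_sum x w r c = 1 \<longleftrightarrow> (\<exists>u<w. c = vadd r (x u))"
proof (cases "\<exists>u<w. c = vadd r (x u)")
  case True
  then obtain u where u: "u < w" "c = vadd r (x u)" by blast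
  have "{u' \<in> {..<w}. c = vadd r (x u')} = {u}"
  proof (intro equalityI subsetI)
    fix u' assume "u' \<in> {u' \<in> {..<w}. c = vadd r (x u')}"
    then have "u' < w" and "vadd r (x u') = vadd r (x u)" using u by auto
    then have "x u' = x u" using assms u by (simp add: vadd_left_cancel)
    then show "u' \<in> {u}" using assms(3) u \<open>u' < w\<close> by (auto dest: inj_onD)
  qed (use u in auto)
  then show ?thesis using True by (simp add: dyadic_sum_eq_card)
next
  case False
  have no_index: "{u \<in> {..<w}. c = vadd r (x u)} = {}"
    using False by auto
  show ?thesis
    unfolding dyadic_sum_eq_card no_index using False by simp
qed

text \<open>The rectangle with first row \<open>r\<close> and columns \<open>c\<^sub>1 = r + x\<^sub>u = r\<^sub>2 + x\<^sub>v\<close>,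
  \<open>c\<^sub>2 = r + x\<^sub>u\<^sub>' = r\<^sub>2 + x\<^sub>v\<^sub>'\<close>; the second column equation holds because
  \<open>x\<^sub>u + x\<^sub>v = x\<^sub>u\<^sub>' + x\<^sub>v\<^sub>'\<close>.\<close>

definition rectangle_of ::
    "(nat \<Rightarrow> bool list) \<Rightarrow> bool list \<times> (nat \<times> nat) \<times> (nat \<times> nat) \<Rightarrow>
       bool list \<times> bool list \<times> bool list \<times> bool list" where
  "rectangle_of x = (\<lambda>(r, (u, v), (u', v')). (r, vadd r (vadd (x u) (x v)), vadd r (x u), vadd r (x u')))"

lemma rectangle_of_in_rectangles:
  assumes x: "\<forall>u<w. x u \<in> vecs l" and inj: "inj_on x {..<w}"
    and "r \<in> vecs l" and "((u, v), (u', v')) \<in> R_pairs x w"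
  shows "rectangle_of x (r, (u, v), (u', v')) \<in> rectangles (vecs l) (vecs l) (dyadic_sum x w)"
proof -
  have idx: "u < w" "v < w" "u' < w" "v' < w" "u \<noteq> v" "u \<noteq> u'"
    and sums: "vadd (x u) (x v) = vadd (x u') (x v')"
    using assms(4) by (auto simp: R_pairs_def)
  have len: "length r = l" "length (x u) = l" "length (x v) = l" "length (x u') = l" "length (x v') = l"
    using x idx \<open>r \<in> vecs l\<close> by auto
  have distinct: "x u \<noteq> x v" "x u \<noteq> x u'"
    using idx inj by (auto dest: inj_onD)
  define r\<^sub>2 where "r\<^sub>2 = vadd r (vadd (x u) (x v))"
  have len_r\<^sub>2: "length r\<^sub>2 = l"
    using len by (simp add: r\<^sub>2_def)
  have r_r\<^sub>2: "vadd r r\<^sub>2 = vadd (x u) (x v)"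
    unfolding r\<^sub>2_def using len by (simp add: vadd_vadd_cancel)
  have c\<^sub>1: "vadd r (x u) = vadd r\<^sub>2 (x v)"
    by (rule vadd_eq_vadd_swap[THEN iffD2]) (use len len_r\<^sub>2 r_r\<^sub>2 in simp_all)
  have c\<^sub>2: "vadd r (x u') = vadd r\<^sub>2 (x v')"
    by (rule vadd_eq_vadd_swap[THEN iffD2]) (use len len_r\<^sub>2 r_r\<^sub>2 sums in simp_all)
  have "r \<noteq> r\<^sub>2"
    using c\<^sub>1 distinct len by (auto simp: vadd_left_cancel)
  moreover have "vadd r (x u) \<noteq> vadd r (x u')"
    using distinct len by (simp add: vadd_left_cancel)
  moreover have entry: "dyadic_sum x w r\<^sub>0 c = 1" if "length r\<^sub>0 = l" "u\<^sub>0 < w" "c = vadd r\<^sub>0 (x u\<^sub>0)"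
    for r\<^sub>0 c u\<^sub>0
    using dyadic_sum_eq_1_iff[OF that(1) x inj] that(2,3) by blast
  note entry[OF len(1) idx(1) refl] entry[OF len_r\<^sub>2 idx(2) c\<^sub>1]
    entry[OF len_r\<^sub>2 idx(4) c\<^sub>2] entry[OF len(1) idx(3) refl]
  moreover have "rectangle_of x (r, (u, v), (u', v')) = (r, r\<^sub>2, vadd r (x u), vadd r (x u'))"
    by (simp add: rectangle_of_def r\<^sub>2_def)
  ultimately show ?thesis
    using len len_r\<^sub>2 by (simp add: rectangles_def)
qed

lemma inj_on_rectangle_of:
  assumes x: "\<forall>u<w. x u \<in> vecs l" and inj: "inj_on x {..<w}"
  shows "inj_on (rectangle_of x) (vecs l \<times> R_pairs x w)"
proof (rule inj_onI)
  fix p q assume p: "p \<in> vecs l \<times> R_pairs x w" and q: "q \<in> vecs l \<times> R_pairs x w"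
    and eq: "rectangle_of x p = rectangle_of x q"
  obtain r u v u' v' where p_eq: "p = (r, (u, v), (u', v'))"
    by (cases p) auto
  obtain s a b a' b' where q_eq: "q = (s, (a, b), (a', b'))"
    by (cases q) auto
  have idx: "u < w" "v < w" "u' < w" "v' < w" "a < w" "b < w" "a' < w" "b' < w"
    and sums: "vadd (x u) (x v) = vadd (x u') (x v')" "vadd (x a) (x b) = vadd (x a') (x b')"
    and len_r: "length r = l"
    using p q unfolding p_eq q_eq by (auto simp: R_pairs_def)
  have len: "length (x i) = l" if "i < w" for i
    using x that by simp
  have x_eq: "i = j" if "x i = x j" "i < w" "j < w" for i j
    using inj that by (auto dest: inj_onD)
  have "(r, vadd r (vadd (x u) (x v)), vadd r (x u), vadd r (x u')) =
      (s, vadd s (vadd (x a) (x b)), vadd s (x a), vadd s (x a'))"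
    using eq unfolding p_eq q_eq rectangle_of_def by (simp only: case_prod_conv)
  then have "r = s" and row\<^sub>2: "vadd r (vadd (x u) (x v)) = vadd r (vadd (x a) (x b))"
    and col\<^sub>1: "vadd r (x u) = vadd r (x a)" and col\<^sub>2: "vadd r (x u') = vadd r (x a')"
    by auto
  have "x u = x a" "x u' = x a'"
    using col\<^sub>1 col\<^sub>2 len_r idx by (simp_all add: len vadd_left_cancel)
  moreover from this have "x v = x b"
    using row\<^sub>2 len_r idx by (simp add: len vadd_left_cancel)
  moreover from calculation have "x v' = x b'"
    using sums idx by (simp add: len vadd_left_cancel)
  ultimately show "p = q"
    unfolding p_eq q_eq \<open>r = s\<close> using idx by (auto intro: x_eq)
qed

lemma rectangles_subset_image_rectangle_of:
  assumes x: "\<forall>u<w. x u \<in> vecs l" and inj: "inj_on x {..<w}"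
  shows "rectangles (vecs l) (vecs l) (dyadic_sum x w) \<subseteq> rectangle_of x ` (vecs l \<times> R_pairs x w)"
proof
  fix t assume t: "t \<in> rectangles (vecs l) (vecs l) (dyadic_sum x w)"
  obtain r\<^sub>1 r\<^sub>2 c\<^sub>1 c\<^sub>2 where t_eq: "t = (r\<^sub>1, r\<^sub>2, c\<^sub>1, c\<^sub>2)"
    by (cases t)
  have len_r: "length r\<^sub>1 = l" "length r\<^sub>2 = l" and "r\<^sub>1 \<noteq> r\<^sub>2" "c\<^sub>1 \<noteq> c\<^sub>2"
    and ones: "dyadic_sum x w r\<^sub>1 c\<^sub>1 = 1" "dyadic_sum x w r\<^sub>2 c\<^sub>1 = 1"
      "dyadic_sum x w r\<^sub>2 c\<^sub>2 = 1" "dyadic_sum x w r\<^sub>1 c\<^sub>2 = 1"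
    using t unfolding t_eq rectangles_def by simp_all
  note entry = dyadic_sum_eq_1_iff[OF _ x inj]
  obtain u v v' u' where idx: "u < w" "v < w" "v' < w" "u' < w"
    and c\<^sub>1: "c\<^sub>1 = vadd r\<^sub>1 (x u)" "c\<^sub>1 = vadd r\<^sub>2 (x v)"
    and c\<^sub>2: "c\<^sub>2 = vadd r\<^sub>2 (x v')" "c\<^sub>2 = vadd r\<^sub>1 (x u')"
    using ones entry[OF len_r(1)] entry[OF len_r(2)] by metis
  have len: "length (x i) = l" if "i < w" for i
    using x that by simp
  have r\<^sub>1_r\<^sub>2: "vadd r\<^sub>1 r\<^sub>2 = vadd (x u) (x v)" "vadd r\<^sub>1 r\<^sub>2 = vadd (x u') (x v')"
    by (rule vadd_eq_vadd_swap[THEN iffD1]; use c\<^sub>1 c\<^sub>2 len_r idx in \<open>simp add: len\<close>)+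
  have "u \<noteq> v" "u' \<noteq> v'"
    using c\<^sub>1 c\<^sub>2 \<open>r\<^sub>1 \<noteq> r\<^sub>2\<close> len_r idx by (auto simp: len vadd_right_cancel)
  moreover have "u \<noteq> u'" "v \<noteq> v'"
    using c\<^sub>1 c\<^sub>2 \<open>c\<^sub>1 \<noteq> c\<^sub>2\<close> by auto
  ultimately have "((u, v), (u', v')) \<in> R_pairs x w"
    using idx r\<^sub>1_r\<^sub>2 by (simp add: R_pairs_def)
  moreover have "r\<^sub>2 = vadd r\<^sub>1 (vadd (x u) (x v))"
    using r\<^sub>1_r\<^sub>2(1) len_r by (metis vadd_vadd_cancel)
  then have "t = rectangle_of x (r\<^sub>1, (u, v), (u', v'))"
    unfolding t_eq rectangle_of_def using c\<^sub>1(1) c\<^sub>2(2) by simp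
  ultimately show "t \<in> rectangle_of x ` (vecs l \<times> R_pairs x w)"
    using len_r by force
qed

lemma bij_betw_rectangle_of:
  assumes "\<forall>u<w. x u \<in> vecs l" and "inj_on x {..<w}"
  shows "bij_betw (rectangle_of x) (vecs l \<times> R_pairs x w) (rectangles (vecs l) (vecs l) (dyadic_sum x w))"
proof (rule bij_betw_imageI)
  show "inj_on (rectangle_of x) (vecs l \<times> R_pairs x w)"
    using assms by (rule inj_on_rectangle_of)
  show "rectangle_of x ` (vecs l \<times> R_pairs x w) = rectangles (vecs l) (vecs l) (dyadic_sum x w)"
  proof
    show "rectangle_of x ` (vecs l \<times> R_pairs x w) \<subseteq> rectangles (vecs l) (vecs l) (dyadic_sum x w)"
      using rectangle_of_in_rectangles[OF assms] by auto
  qed (rule rectangles_subset_image_rectangle_of[OF assms])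
qed

lemma finite_R_pairs: "finite (R_pairs x w)"
  by (rule finite_subset[of _ "({..<w} \<times> {..<w}) \<times> ({..<w} \<times> {..<w})"]) (auto simp: R_pairs_def)

lemma R_c_plus_R_nc: "R_c x w + R_nc x w = card (R_pairs x w)"
proof -
  let ?crossed = "{((u, v), (u', v')). u = v' \<and> v = u'} :: ((nat \<times> nat) \<times> (nat \<times> nat)) set"
  have "R_c x w = card (R_pairs x w \<inter> ?crossed)" and "R_nc x w = card (R_pairs x w - ?crossed)"
    unfolding R_c_def R_nc_def by (auto intro!: arg_cong[where f = card])
  then show ?thesis
    using card_Int_Diff[OF finite_R_pairs] by simp
qed

lemma num_cycles_4_dyadic_sum:
  assumes "\<forall>u<w. x u \<in> vecs l" and "inj_on x {..<w}"
  shows "4 * num_cycles (tanner_adj (vecs l) (vecs l) (dyadic_sum x w)) 4 = 2 ^ l * card (R_pairs x w)"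
proof -
  have "4 * num_cycles (tanner_adj (vecs l) (vecs l) (dyadic_sum x w)) 4 =
      card (rectangles (vecs l) (vecs l) (dyadic_sum x w))"
    using card_rectangles[OF finite_vecs finite_vecs] by simp
  also have "\<dots> = card (vecs l \<times> R_pairs x w)"
    using bij_betw_rectangle_of[OF assms] by (rule bij_betw_same_card[symmetric])
  also have "\<dots> = 2 ^ l * card (R_pairs x w)"
    by (simp add: card_cartesian_product card_vecs)
  finally show ?thesis .
qed

lemma R_pairs_nonempty:
  assumes "w \<ge> 2" and "inj_on x {..<w}"
  shows "R_pairs x w \<noteq> {}"
proof -
  have "x 0 \<noteq> x 1"
    using assms by (auto dest: inj_onD)
  then have "((0, 1), (1, 0)) \<in> R_pairs x w"
    using assms(1) by (simp add: R_pairs_def vadd_commute)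
  then show ?thesis by blast
qed

theorem mainTheorem5:
  fixes l w :: nat and x :: "nat \<Rightarrow> bool list"
  assumes "l \<ge> 1"
    and "\<forall>u<w. x u \<in> vecs l"
    and "inj_on x {..<w}"
  shows "real (num_cycles (tanner_adj (vecs l) (vecs l) (dyadic_sum x w)) 4)
           = 2 ^ l / 4 * (real (R_c x w) + real (R_nc x w))
         \<and> (w \<ge> 2 \<longrightarrow> girth (tanner_adj (vecs l) (vecs l) (dyadic_sum x w)) = 4)"
proof -
  let ?adj = "tanner_adj (vecs l) (vecs l) (dyadic_sum x w)"
  note count = num_cycles_4_dyadic_sum[OF assms(2,3)]
  have "girth ?adj = 4" if "w \<ge> 2"
  proof -
    have "card (R_pairs x w) > 0"
      using R_pairs_nonempty[OF that assms(3)] finite_R_pairs by (simp add: card_gt_0_iff)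
    with count have "cycles ?adj 4 \<noteq> {}"
      unfolding num_cycles_def by auto
    then have "girth ?adj = enat 4"
      using cycles_tanner_adj_less_4 by (rule girth_eqI)
    then show ?thesis by (simp add: numeral_eq_enat)
  qed
  moreover have "real (num_cycles ?adj 4) = 2 ^ l / 4 * (real (R_c x w) + real (R_nc x w))"
    using arg_cong[OF count, of real] by (simp add: R_c_plus_R_nc flip: of_nat_add)
  ultimately show ?thesis by blast
qed

end
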